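(* Consider the following MIMO flat-fading model. Fix integers $l_{\mathrm t},l_{\mathrm r},n\ge1$ and a known pilot matrix $S=[s_{t,k}]\in\mathbb{C}^{n\times l_{\mathrm t}}$. Let $\vec{\mathbf h}\sim\mathcal{CN}(\vec\mu_{\vec{\mathbf h}},\Sigma_{\vec{\mathbf h}})$ with $\Sigma_{\vec{\mathbf h}}$ positive definite, $\mathbf f_\delta\sim\mathcal N(\mu_{\mathbf f_\delta},\sigma^2_{\mathbf f_\delta})$ real, noise entries i.i.d. $\mathcal{CN}(0,1)$, all mutually independent, and $\vec{\mathbf y}=\grave X(\mathbf f_\delta)\vec{\mathbf h}+\vec{\mathbf n}$. Then the joint MAP estimation problem of channel and frequency offset, $\max_{(\vec h,f_\delta)\in\mathbb{C}^{l_{\mathrm r}l_{\mathrm t}}\times\mathbb R} f_{\vec{\mathbf h},\mathbf f_\delta,\vec{\mathbf y}}(\vec h,f_\delta,\vec y)$, decomposes into two separable problems: for every $\vec y$, a pair $(\hat{\vec h},\hat f_\delta)$ is a joint maximizer if and only if (1) $\hat f_\delta\in\arg\max_{f_\delta} f_{\vec{\mathbf y}|\mathbf f_\delta}(\vec y|f_\delta)f_{\mathbf f_\delta}(f_\delta)=\arg\max_{f_\delta}g(\vec y,f_\delta)$ (the individual MAP estimate of the frequency offset; it reduces to the ML estimate $\arg\max_{f_\delta}f_{\vec{\mathbf y}|\mathbf f_\delta}(\vec y|f_\delta)$ when $f_{\mathbf f_\delta}$ is taken constant, equivalently $\sigma^{-2}_{\mathbf f_\delta}=0$ in $g$), and (2)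 $\hat{\vec h}=\arg\max_{\vec h} f_{\vec{\mathbf h}|\vec{\mathbf y},\mathbf f_\delta}(\vec h|\vec y,\hat f_\delta)=\hat{\vec h}_{\mathrm{MMSE}}(\vec y,\hat f_\delta)$, where $\hat{\vec h}_{\mathrm{MMSE}}(\vec y,f_\delta)=A\grave X(f_\delta)^\dagger\big(\vec y-\grave X(f_\delta)\vec\mu_{\vec{\mathbf h}}\big)+\vec\mu_{\vec{\mathbf h}}$. Here $g(\vec y,f_\delta)=2\,\mathrm{Re}[\langle\grave X(f_\delta)^\dagger\vec y,\vec b\rangle]+(\grave X(f_\delta)^\dagger\vec y)^\dagger A(\grave X(f_\delta)^\dagger\vec y)-\frac12\sigma_{\mathbf f_\delta}^{-2}|f_\delta-\mu_{\mathbf f_\delta}|^2$.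
   Context: $y_{r,k}=e^{j2\pi \mathbf f_\delta(k-1)}\sum_{t=1}^{l_{\mathrm t}}s_{t,k}h_{r,t}+n_{r,k}$, $r=1..l_{\mathrm r}$, $k=1..n$. $\vec{\mathbf h}$ stacks $h_{r,t}$ in position $(r-1)l_{\mathrm t}+t$; $\vec{\mathbf y},\vec{\mathbf n}$ stack index $(r,k)$ in position $(r-1)n+k$. $F(f)=\mathrm{diag}(e^{j2\pi f(k-1)})_{k=1..n}$, $X(f)=F(f)S$, $\grave X(f)=I_{l_{\mathrm r}}\otimes X(f)$, $\grave S=I_{l_{\mathrm r}}\otimes S$. $A=(\grave S^\dagger\grave S+\Sigma_{\vec{\mathbf h}}^{-1})^{-1}$, $\vec b=(I-A\grave S^\dagger\grave S)\vec\mu_{\vec{\mathbf h}}$. $f_{\vec{\mathbf h},\mathbf f_\delta,\vec{\mathbf y}}$ is the joint density, $f_{\vec{\mathbf h}|\vec{\mathbf y},\mathbf f_\delta}$, $f_{\vec{\mathbf y}|\mathbf f_\delta}$ conditional densities, $f_{\mathbf f_\delta}$ the prior density. $\langle u,v\rangle=v^\dagger u$. *)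

theory Defs
  imports "HOL-Analysis.Analysis"
begin

text \<open>Index conventions: receive antennas are indexed by a finite type 'r, transmit antennas
by a finite type 't, time instants by a finite well-ordered type 'k (so that the k-th instant,
counted from 0, is pos k, playing the role of k-1 in the paper).  The stacked channel vector
lives in complex^('r \<times> 't) and the stacked observation in complex^('r \<times> 'k); entry (r,t)
resp. (r,k) corresponds to position (r-1) lt + t resp. (r-1) n + k of the paper.\<close>

definition pos :: "'k::{finite,wellorder} \<Rightarrow> nat" where
  "pos k = card {k'. k' < k}"

definition cadj :: "complex^'n^'m \<Rightarrow> complex^'m^'n" where
  "cadj M = (\<chi> i j. cnj (M $ j $ i))"

definition cinner :: "complex^'n \<Rightarrow> complex^'n \<Rightarrow> complex" where
  "cinner u v = (\<Sum>i\<in>UNIV. u $ i * cnj (v $ i))"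

definition pos_def_mat :: "complex^'n^'n \<Rightarrow> bool" where
  "pos_def_mat M \<longleftrightarrow> cadj M = M \<and> (\<forall>x. x \<noteq> 0 \<longrightarrow> 0 < Re (cinner (M *v x) x))"

text \<open>\<open>X\<grave>(f) = I_{lr} \<otimes> (F(f) S)\<close>, with pilot matrix S (rows = time instants, columns =
transmit antennas).  \<open>S\<grave> = X\<grave>(0)\<close>.\<close>
definition Xgrave :: "complex^'t::finite^'k::{finite,wellorder} \<Rightarrow> real \<Rightarrow> complex^('r::finite \<times> 't)^('r \<times> 'k)" where
  "Xgrave S f = (\<chi> i j. if fst i = fst j then
        cis (2 * pi * f * real (pos (snd i))) * S $ snd i $ snd j else 0)"

definition Sgrave :: "complex^'t::finite^'k::{finite,wellorder} \<Rightarrow> complex^('r::finite \<times> 't)^('r \<times> 'k)" where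
  "Sgrave S = (\<chi> i j. if fst i = fst j then S $ snd i $ snd j else 0)"

definition Amat :: "complex^'t::finite^'k::{finite,wellorder} \<Rightarrow> complex^('r::finite\<times>'t)^('r\<times>'t)
      \<Rightarrow> complex^('r\<times>'t)^('r\<times>'t)" where
  "Amat S Sig = matrix_inv (cadj (Sgrave S) ** Sgrave S + matrix_inv Sig)"

definition bvec :: "complex^'t::finite^'k::{finite,wellorder} \<Rightarrow> complex^('r::finite\<times>'t)^('r\<times>'t)
      \<Rightarrow> complex^('r::finite\<times>'t) \<Rightarrow> complex^('r\<times>'t)" where
  "bvec S Sig mu = (mat 1 - Amat S Sig ** (cadj (Sgrave S) ** Sgrave S)) *v mu"

definition cgauss_density :: "complex^'n \<Rightarrow> complex^'n^'n \<Rightarrow> complex^'n \<Rightarrow> real" where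
  "cgauss_density mu Sig x =
     exp (- Re (cinner (matrix_inv Sig *v (x - mu)) (x - mu))) / (pi ^ CARD('n) * cmod (det Sig))"

definition noise_density :: "complex^'n \<Rightarrow> real" where
  "noise_density v = exp (- (norm v)\<^sup>2) / pi ^ CARD('n)"

definition rgauss_density :: "real \<Rightarrow> real \<Rightarrow> real \<Rightarrow> real" where
  "rgauss_density m s2 x = exp (- (x - m)\<^sup>2 / (2 * s2)) / sqrt (2 * pi * s2)"

definition joint_density ::
  "complex^'t::finite^'k::{finite,wellorder} \<Rightarrow> complex^('r::finite\<times>'t) \<Rightarrow> complex^('r\<times>'t)^('r\<times>'t) \<Rightarrow> real \<Rightarrow> real
    \<Rightarrow> complex^('r::finite\<times>'t) \<Rightarrow> real \<Rightarrow> complex^('r\<times>'k) \<Rightarrow> real" where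
  "joint_density S mu Sig muf s2 h f y =
     cgauss_density mu Sig h * rgauss_density muf s2 f * noise_density (y - Xgrave S f *v h)"

definition cond_y_given_f ::
  "complex^'t::finite^'k::{finite,wellorder} \<Rightarrow> complex^('r::finite\<times>'t) \<Rightarrow> complex^('r\<times>'t)^('r\<times>'t) \<Rightarrow> real \<Rightarrow> real
    \<Rightarrow> complex^('r\<times>'k) \<Rightarrow> real \<Rightarrow> real" where
  "cond_y_given_f S mu Sig muf s2 y f =
     (\<integral>h. joint_density S mu Sig muf s2 h f y \<partial>lborel) / rgauss_density muf s2 f"

definition cond_h_given_yf ::
  "complex^'t::finite^'k::{finite,wellorder} \<Rightarrow> complex^('r::finite\<times>'t) \<Rightarrow> complex^('r\<times>'t)^('r\<times>'t) \<Rightarrow> real \<Rightarrow> real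
    \<Rightarrow> complex^('r::finite\<times>'t) \<Rightarrow> complex^('r\<times>'k) \<Rightarrow> real \<Rightarrow> real" where
  "cond_h_given_yf S mu Sig muf s2 h y f =
     joint_density S mu Sig muf s2 h f y
       / (cond_y_given_f S mu Sig muf s2 y f * rgauss_density muf s2 f)"

definition h_mmse ::
  "complex^'t::finite^'k::{finite,wellorder} \<Rightarrow> complex^('r::finite\<times>'t) \<Rightarrow> complex^('r\<times>'t)^('r\<times>'t)
    \<Rightarrow> complex^('r\<times>'k) \<Rightarrow> real \<Rightarrow> complex^('r\<times>'t)" where
  "h_mmse S mu Sig y f =
     Amat S Sig *v (cadj (Xgrave S f) *v (y - Xgrave S f *v mu)) + mu"

text \<open>The objective g; the parameter isig2 stands for \<open>\<sigma>_{f\<delta>}^{-2}\<close> (isig2 = 0 gives the ML variant).\<close>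
definition gfun ::
  "complex^'t::finite^'k::{finite,wellorder} \<Rightarrow> complex^('r::finite\<times>'t) \<Rightarrow> complex^('r\<times>'t)^('r\<times>'t) \<Rightarrow> real \<Rightarrow> real
    \<Rightarrow> complex^('r\<times>'k) \<Rightarrow> real \<Rightarrow> real" where
  "gfun S mu Sig muf isig2 y f =
     (let z = cadj (Xgrave S f) *v y in
       2 * Re (cinner z (bvec S Sig mu)) + Re (cinner (Amat S Sig *v z) z)
       - 1/2 * isig2 * \<bar>f - muf\<bar>\<^sup>2)"

end

theory Submission
  imports Defs "HOL-Probability.Distributions"
begin

text \<open>Completing the square in \<open>h\<close>, the exponent of the joint density becomes
\<open>(h - h_MMSE(y,f))\<^sup>\<dagger> A\<^sup>-\<^sup>1 (h - h_MMSE(y,f)) - g(y,f) + c(y)\<close>.  The offset only multiplies the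
rows of the pilot matrix by unimodular factors, so \<open>X\<grave>(f)\<^sup>\<dagger> X\<grave>(f) = S\<grave>\<^sup>\<dagger> S\<grave>\<close> and the
posterior precision \<open>A\<^sup>-\<^sup>1\<close> does not depend on \<open>f\<close>.  Hence the joint density is a positive
constant times \<open>exp (g(y,f)) exp (-(h - h_MMSE)\<^sup>\<dagger> A\<^sup>-\<^sup>1 (h - h_MMSE))\<close>; integrating out \<open>h\<close>
gives the same Gaussian mass for every \<open>f\<close>, and all maximizers can be read off.\<close>

abbreviation herm_form :: "complex^'n^'n \<Rightarrow> complex^'n \<Rightarrow> real" where
  "herm_form M x \<equiv> Re (cinner (M *v x) x)"

lemma cinner_add_left: "cinner (u + v) w = cinner u w + cinner v w"
  by (simp add: cinner_def algebra_simps sum.distrib)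

lemma cinner_add_right: "cinner w (u + v) = cinner w u + cinner w v"
  by (simp add: cinner_def algebra_simps sum.distrib)

lemma cinner_diff_left: "cinner (u - v) w = cinner u w - cinner v w"
  by (simp add: cinner_def algebra_simps sum_subtractf)

lemma cinner_diff_right: "cinner w (u - v) = cinner w u - cinner w v"
  by (simp add: cinner_def algebra_simps sum_subtractf)

lemma cinner_zero_left [simp]: "cinner 0 w = 0"
  by (simp add: cinner_def)

lemma cinner_commute: "cinner v u = cnj (cinner u v)"
  by (simp add: cinner_def mult.commute)

lemma Re_cinner_commute: "Re (cinner v u) = Re (cinner u v)"
  by (subst cinner_commute) simp

lemma cinner_matrix_vector_mult: "cinner (M *v u) v = cinner u (cadj M *v v)"
  unfolding cinner_def cadj_def matrix_vector_mult_def
  by (simp add: sum_distrib_left sum_distrib_right, subst sum.swap, simp add: mult_ac)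

lemma cinner_self: "cinner u u = complex_of_real ((norm u)\<^sup>2)"
proof -
  have "(norm u)\<^sup>2 = (\<Sum>i\<in>UNIV. (cmod (u $ i))\<^sup>2)"
    by (simp add: norm_vec_def L2_set_def sum_nonneg)
  then show ?thesis
    unfolding cinner_def by (simp add: complex_norm_square del: of_real_power)
qed

lemma norm_diff_square_cinner:
  "(norm (u - v))\<^sup>2 = (norm u)\<^sup>2 - 2 * Re (cinner v u) + (norm v)\<^sup>2"
proof -
  have "cinner (u - v) (u - v) = cinner u u - cinner u v - cinner v u + cinner v v"
    by (simp add: cinner_diff_left cinner_diff_right)
  then have "Re (cinner (u - v) (u - v))
      = Re (cinner u u) - 2 * Re (cinner v u) + Re (cinner v v)"
    by (simp add: Re_cinner_commute[of u v])
  then show ?thesis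
    by (simp add: cinner_self)
qed

lemma herm_form_diff:
  assumes "cadj M = M"
  shows "herm_form M (u - v) = herm_form M u - 2 * Re (cinner u (M *v v)) + herm_form M v"
proof -
  have "cinner (M *v (u - v)) (u - v)
      = cinner (M *v u) u - cinner (M *v u) v - cinner (M *v v) u + cinner (M *v v) v"
    by (simp add: matrix_vector_mult_diff_distrib cinner_diff_left cinner_diff_right)
  moreover have "cinner (M *v u) v = cinner u (M *v v)"
    using cinner_matrix_vector_mult[of M u v] assms by simp
  ultimately show ?thesis
    by (simp add: Re_cinner_commute[of "M *v v" u])
qed

lemma cadj_cadj [simp]: "cadj (cadj M) = M"
  by (simp add: cadj_def vec_eq_iff)

lemma cadj_matrix_mul: "cadj (A ** B) = cadj B ** cadj A"
  by (simp add: cadj_def vec_eq_iff matrix_matrix_mult_def mult.commute)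

lemma cadj_mat_1 [simp]: "cadj (mat 1) = mat 1"
  by (simp add: cadj_def vec_eq_iff mat_def)

lemma cadj_add: "cadj (A + B) = cadj A + cadj B"
  by (simp add: cadj_def vec_eq_iff)

lemma herm_form_gram: "herm_form (cadj T ** T) x = (norm (T *v x))\<^sup>2"
  by (simp only: matrix_vector_mul_assoc[symmetric] cinner_matrix_vector_mult[of "cadj T"]
      cadj_cadj) (simp add: cinner_self)

lemma herm_form_scaleR: "herm_form M (r *\<^sub>R x) = r\<^sup>2 * herm_form M x"
  by (simp add: cinner_def matrix_vector_mult_def scaleR_sum_right sum_distrib_left
      power2_eq_square mult_ac)

lemma continuous_on_herm_form: "continuous_on UNIV (herm_form M)"
  unfolding cinner_def matrix_vector_mult_def by (intro continuous_intros)

lemma borel_measurable_herm_form: "herm_form M \<in> borel_measurable borel"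
  by (rule borel_measurable_continuous_onI[OF continuous_on_herm_form])

lemma matrix_inv:
  fixes M :: "complex^'n^'n"
  assumes "invertible M"
  shows matrix_inv_right: "M ** matrix_inv M = mat 1"
    and matrix_inv_left: "matrix_inv M ** M = mat 1"
proof -
  have "\<exists>A'. M ** A' = mat 1 \<and> A' ** M = mat 1"
    using assms by (simp add: invertible_def)
  then have "M ** matrix_inv M = mat 1 \<and> matrix_inv M ** M = mat 1"
    unfolding matrix_inv_def by (rule someI_ex)
  then show "M ** matrix_inv M = mat 1" "matrix_inv M ** M = mat 1" by auto
qed

lemma cadj_matrix_inv:
  fixes M :: "complex^'n^'n"
  assumes "invertible M"
  shows "cadj (matrix_inv M) = matrix_inv (cadj M)"
proof -
  have left: "cadj (matrix_inv M) ** cadj M = mat 1"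
    using matrix_inv_right[OF assms] by (metis cadj_matrix_mul cadj_mat_1)
  have right: "cadj M ** cadj (matrix_inv M) = mat 1"
    using matrix_inv_left[OF assms] by (metis cadj_matrix_mul cadj_mat_1)
  then have "invertible (cadj M)"
    using left invertible_def by blast
  then show ?thesis
    by (metis left matrix_inv_right matrix_mul_assoc matrix_mul_lid matrix_mul_rid)
qed

lemma pos_def_mat_invertible:
  assumes "pos_def_mat M"
  shows "invertible M"
proof -
  have "\<forall>x. M *v x = 0 \<longrightarrow> x = 0"
    using assms unfolding pos_def_mat_def
    by (metis cinner_zero_left less_irrefl zero_complex.sel(1))
  then show ?thesis
    by (simp add: invertible_left_inverse matrix_left_invertible_ker)
qed

lemma pos_def_mat_matrix_inv:
  fixes M :: "complex^'n^'n"
  assumes M: "pos_def_mat M"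
  shows "pos_def_mat (matrix_inv M)"
  unfolding pos_def_mat_def
proof (intro conjI allI impI)
  have inv: "invertible M"
    using pos_def_mat_invertible[OF M] .
  then show "cadj (matrix_inv M) = matrix_inv M"
    using M cadj_matrix_inv unfolding pos_def_mat_def by metis
  fix x :: "complex^'n"
  assume "x \<noteq> 0"
  define u where "u = matrix_inv M *v x"
  have x: "x = M *v u"
    by (simp add: u_def matrix_vector_mul_assoc matrix_inv_right[OF inv])
  have "u \<noteq> 0"
    using \<open>x \<noteq> 0\<close> x by auto
  then have "0 < herm_form M u"
    using M unfolding pos_def_mat_def by blast
  also have "herm_form M u = herm_form (matrix_inv M) x"
    unfolding x u_def[symmetric]
    by (simp add: Re_cinner_commute matrix_vector_mul_assoc matrix_inv_left[OF inv])
  finally show "0 < herm_form (matrix_inv M) x" .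
qed

lemma pos_def_mat_gram_add:
  assumes "pos_def_mat P"
  shows "pos_def_mat (cadj T ** T + P)"
  using assms unfolding pos_def_mat_def
  by (auto simp: cadj_add cadj_matrix_mul matrix_vector_mult_add_rdistrib cinner_add_left
      herm_form_gram intro: add_nonneg_pos)

lemma pos_def_mat_lower_bound:
  fixes M :: "complex^'n^'n"
  assumes "pos_def_mat M"
  obtains l where "l > 0" "\<And>x. l * (norm x)\<^sup>2 \<le> herm_form M x"
proof -
  have "sphere (0 :: complex^'n) 1 \<noteq> {}"
    by simp
  then obtain x0 :: "complex^'n" where x0: "x0 \<in> sphere 0 1"
    and min: "\<forall>u\<in>sphere 0 1. herm_form M x0 \<le> herm_form M u"
    using continuous_attains_inf[OF compact_sphere _
        continuous_on_subset[OF continuous_on_herm_form]] by blast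
  have "x0 \<noteq> 0" using x0 by auto
  then have "herm_form M x0 > 0"
    using assms unfolding pos_def_mat_def by blast
  moreover have "herm_form M x0 * (norm x)\<^sup>2 \<le> herm_form M x" for x
  proof (cases "x = 0")
    case False
    define u where "u = (1 / norm x) *\<^sub>R x"
    have "u \<in> sphere 0 1" "x = norm x *\<^sub>R u"
      using False by (simp_all add: u_def)
    then show ?thesis
      using min by (metis herm_form_scaleR mult.commute mult_right_mono zero_le_power2)
  qed simp
  ultimately show ?thesis using that by blast
qed

lemma herm_form_complete_square:
  fixes T :: "complex^'n^'m" and P :: "complex^'n^'n" and y :: "complex^'m"
  defines "M \<equiv> cadj T ** T + P"
  defines "A \<equiv> matrix_inv M" and "z \<equiv> cadj T *v y"
  assumes P: "cadj P = P" and inv: "invertible M"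
  shows "herm_form P (h - \<mu>) + (norm (y - T *v h))\<^sup>2
       = herm_form M (h - A *v (z + P *v \<mu>))
         - (2 * Re (cinner z (A *v (P *v \<mu>))) + herm_form A z)
         + (herm_form P \<mu> + (norm y)\<^sup>2 - herm_form A (P *v \<mu>))"
proof -
  define c where "c = z + P *v \<mu>"
  have M: "cadj M = M"
    unfolding M_def by (simp add: cadj_add cadj_matrix_mul P)
  have A: "cadj A = A"
    unfolding A_def using cadj_matrix_inv[OF inv] M by simp
  have MA: "M *v (A *v c) = c"
    by (simp add: A_def matrix_vector_mul_assoc matrix_inv_right[OF inv])
  have prior:
    "herm_form P (h - \<mu>) = herm_form P h - 2 * Re (cinner h (P *v \<mu>)) + herm_form P \<mu>"
    by (rule herm_form_diff[OF P])
  have likelihood: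
    "(norm (y - T *v h))\<^sup>2 = (norm y)\<^sup>2 - 2 * Re (cinner h z) + herm_form (cadj T ** T) h"
    unfolding herm_form_gram z_def cinner_matrix_vector_mult[of T h y, symmetric]
    by (rule norm_diff_square_cinner)
  have posterior:
    "herm_form M (h - A *v c) = herm_form M h - 2 * Re (cinner h c) + herm_form A c"
    using herm_form_diff[OF M, of h "A *v c"] by (simp add: MA Re_cinner_commute[of c])
  have "cinner (A *v z) (P *v \<mu>) = cinner z (A *v (P *v \<mu>))"
    using cinner_matrix_vector_mult[of A z] A by simp
  then have "herm_form A c
      = herm_form A (P *v \<mu>) + 2 * Re (cinner z (A *v (P *v \<mu>))) + herm_form A z"
    unfolding c_def
    by (simp add: matrix_vector_right_distrib cinner_add_left cinner_add_right
        Re_cinner_commute[of "A *v (P *v \<mu>)" z])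
  moreover have "herm_form M h = herm_form (cadj T ** T) h + herm_form P h"
    unfolding M_def by (simp add: matrix_vector_mult_add_rdistrib cinner_add_left)
  moreover have "Re (cinner h c) = Re (cinner h z) + Re (cinner h (P *v \<mu>))"
    unfolding c_def by (simp add: cinner_add_right)
  ultimately show ?thesis
    using prior likelihood posterior unfolding c_def[symmetric] by linarith
qed

lemma integrable_exp_neg_square:
  fixes l :: real
  assumes "l > 0"
  shows "integrable lborel (\<lambda>t::real. exp (- l * t\<^sup>2))"
proof -
  define s where "s = sqrt (1 / (2 * l))"
  have s: "s > 0" "2 * s\<^sup>2 = 1 / l"
    using assms by (simp_all add: s_def)
  have "exp (- l * t\<^sup>2) = sqrt (2 * pi * s\<^sup>2) * normal_density 0 s t" for t :: real
  proof -
    have "- (t\<^sup>2) / (2 * s\<^sup>2) = - l * t\<^sup>2"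
      by (simp only: s(2)) simp
    then show ?thesis
      using s by (simp add: normal_density_def)
  qed
  then show ?thesis
    using integrable_normal_density[OF s(1), of 0] by simp
qed

lemma integrable_exp_neg_norm_square:
  fixes l :: real
  assumes l: "l > 0"
  shows "integrable lborel (\<lambda>x::'a::euclidean_space. exp (- l * (norm x)\<^sup>2))"
proof -
  let ?T = "\<lambda>f. \<Sum>b\<in>(Basis::'a set). f b *\<^sub>R b"
  have "integrable (\<Pi>\<^sub>M b\<in>(Basis::'a set). lborel) (\<lambda>f. \<Prod>b\<in>Basis. exp (- l * (f b)\<^sup>2))"
    by (rule product_sigma_finite.product_integrable_prod)
      (auto simp: integrable_exp_neg_square[OF l, simplified] product_sigma_finite_def
        intro: lborel.sigma_finite_measure_axioms)
  moreover have "exp (- l * (norm (?T f))\<^sup>2) = (\<Prod>b\<in>Basis. exp (- l * (f b)\<^sup>2))" for f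
  proof -
    have "(norm (?T f))\<^sup>2 = (\<Sum>b\<in>Basis. (f b)\<^sup>2)"
      by (simp only: power2_norm_eq_inner)
        (simp add: euclidean_inner[of "?T f" "?T f"] power2_eq_square)
    then show ?thesis
      by (simp add: sum_distrib_left exp_sum)
  qed
  ultimately have "integrable (distr (\<Pi>\<^sub>M b\<in>(Basis::'a set). lborel) borel ?T)
      (\<lambda>x. exp (- l * (norm x)\<^sup>2))"
    by (subst integrable_distr_eq) auto
  then show ?thesis
    by (simp flip: lborel_eq)
qed

lemma integrable_exp_neg_herm_form:
  fixes M :: "complex^'n^'n"
  assumes "pos_def_mat M"
  shows "integrable lborel (\<lambda>x. exp (- herm_form M x))"
proof -
  obtain l where l: "l > 0" "\<And>x. l * (norm x)\<^sup>2 \<le> herm_form M x"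
    using pos_def_mat_lower_bound[OF assms] by blast
  show ?thesis
  proof (rule Bochner_Integration.integrable_bound[OF integrable_exp_neg_norm_square[OF l(1)]])
    show "(\<lambda>x. exp (- herm_form M x)) \<in> borel_measurable lborel"
      using borel_measurable_herm_form by measurable
  qed (use l(2) in auto)
qed

lemma integral_exp_neg_herm_form_pos:
  fixes M :: "complex^'n^'n"
  assumes "pos_def_mat M"
  shows "(\<integral>x. exp (- herm_form M x) \<partial>lborel) > 0"
proof -
  have int: "integrable lborel (\<lambda>x. exp (- herm_form M x))"
    using integrable_exp_neg_herm_form[OF assms] .
  have "(\<integral>x. exp (- herm_form M x) \<partial>lborel) \<noteq> 0"
  proof
    assume "(\<integral>x. exp (- herm_form M x) \<partial>lborel) = 0"
    then have "AE x in lborel. x \<notin> (UNIV :: (complex^'n) set)"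
      using integral_nonneg_eq_0_iff_AE[OF int] by auto
    then have "UNIV \<in> null_sets (lborel :: (complex^'n) measure)"
      by (subst AE_iff_null_sets) auto
    then show False
      by (simp add: null_sets_def)
  qed
  moreover have "0 \<le> (\<integral>x. exp (- herm_form M x) \<partial>lborel)"
    by (rule integral_nonneg_AE) auto
  ultimately show ?thesis by linarith
qed

lemma integral_lborel_shift:
  fixes g :: "'a::euclidean_space \<Rightarrow> 'b::{banach, second_countable_topology}"
  assumes "g \<in> borel_measurable borel"
  shows "(\<integral>x. g (x - w) \<partial>lborel) = (\<integral>x. g x \<partial>lborel)"
proof -
  have "(\<integral>x. g x \<partial>(distr lborel borel ((+) (- w)))) = (\<integral>x. g (- w + x) \<partial>lborel)"
    using assms by (intro integral_distr) auto
  then show ?thesis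
    by (simp add: lborel_distr_plus)
qed

lemma max_diff_nonneg_iff:
  fixes E :: "'b \<Rightarrow> 'a \<Rightarrow> real" and G :: "'b \<Rightarrow> real"
  assumes nonneg: "\<And>f h. 0 \<le> E f h" and zero: "\<And>f h. E f h = 0 \<longleftrightarrow> h = w f"
  shows "(\<forall>h' f'. G f' - E f' h' \<le> G f - E f h) \<longleftrightarrow> (\<forall>f'. G f' \<le> G f) \<and> h = w f"
proof
  assume max: "\<forall>h' f'. G f' - E f' h' \<le> G f - E f h"
  have zero_at_w: "E f' (w f') = 0" for f'
    using zero by simp
  have "E f h \<le> 0"
    using max[rule_format, of f "w f"] zero_at_w by simp
  then have "h = w f"
    using nonneg[of f h] zero[of f h] by simp
  moreover have "G f' \<le> G f" for f'
    using max[rule_format, of f' "w f'"] zero_at_w \<open>h = w f\<close> by simp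
  ultimately show "(\<forall>f'. G f' \<le> G f) \<and> h = w f"
    by blast
next
  assume "(\<forall>f'. G f' \<le> G f) \<and> h = w f"
  then show "\<forall>h' f'. G f' - E f' h' \<le> G f - E f h"
    using nonneg zero by (metis diff_le_eq diff_zero le_add_same_cancel1 order_trans)
qed

lemma cadj_Xgrave_mult_Xgrave:
  fixes S :: "complex^'t::finite^'k::{finite,wellorder}"
  shows "cadj (Xgrave S f :: complex^('r::finite \<times> 't)^('r \<times> 'k)) ** Xgrave S f
       = cadj (Sgrave S) ** Sgrave S"
proof -
  have "cnj (cis t) * cis t = 1" for t
    by (simp add: cis_cnj cis_mult)
  then have "cnj (Xgrave S f $ l $ i) * Xgrave S f $ l $ j
      = cnj (Sgrave S $ l $ i) * Sgrave S $ l $ j" for l :: "'r \<times> 'k" and i j :: "'r \<times> 't"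
    unfolding Xgrave_def Sgrave_def by (auto simp: algebra_simps)
  then show ?thesis
    by (simp add: vec_eq_iff matrix_matrix_mult_def cadj_def)
qed

locale mimo_map_model =
  fixes S :: "complex^'t::finite^'k::{finite,wellorder}"
    and mu :: "complex^('r::finite \<times> 't)"
    and Sig :: "complex^('r \<times> 't)^('r \<times> 't)"
    and muf s2 :: real
    and y :: "complex^('r \<times> 'k)"
  assumes Sig_pos_def: "pos_def_mat Sig"
    and s2_pos: "s2 > 0"
begin

definition precision :: "complex^('r \<times> 't)^('r \<times> 't)" where
  "precision = cadj (Sgrave S :: complex^('r \<times> 't)^('r \<times> 'k)) ** Sgrave S + matrix_inv Sig"

definition posterior_form :: "real \<Rightarrow> complex^('r \<times> 't) \<Rightarrow> real" where
  "posterior_form f h = herm_form precision (h - h_mmse S mu Sig y f)"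

definition residual :: real where
  "residual = herm_form (matrix_inv Sig) mu + (norm y)\<^sup>2
      - herm_form (Amat S Sig) (matrix_inv Sig *v mu)"

definition scale :: real where
  "scale = exp (- residual)
      / (pi ^ CARD('r \<times> 't) * cmod (det Sig) * sqrt (2 * pi * s2) * pi ^ CARD('r \<times> 'k))"

definition gauss_mass :: real where
  "gauss_mass = (\<integral>x. exp (- herm_form precision x) \<partial>lborel)"

lemma precision_pos_def: "pos_def_mat precision"
  unfolding precision_def by (intro pos_def_mat_gram_add pos_def_mat_matrix_inv Sig_pos_def)

lemma Amat_eq: "Amat S Sig = matrix_inv precision"
  by (simp add: Amat_def precision_def)

lemma scale_pos: "scale > 0"
proof -
  have "det Sig \<noteq> 0"
    using pos_def_mat_invertible[OF Sig_pos_def] invertible_det_nz by blast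
  then show ?thesis
    using s2_pos by (simp add: scale_def)
qed

lemma gauss_mass_pos: "gauss_mass > 0"
  unfolding gauss_mass_def by (rule integral_exp_neg_herm_form_pos[OF precision_pos_def])

lemma posterior_form_nonneg: "posterior_form f h \<ge> 0"
  using precision_pos_def unfolding posterior_form_def pos_def_mat_def
  by (cases "h = h_mmse S mu Sig y f") (auto intro: less_imp_le)

lemma posterior_form_eq_0_iff: "posterior_form f h = 0 \<longleftrightarrow> h = h_mmse S mu Sig y f"
  using precision_pos_def unfolding posterior_form_def pos_def_mat_def
  by (cases "h = h_mmse S mu Sig y f") (auto simp: less_le)

lemma Amat_mult_matrix_inv_Sig:
  "Amat S Sig ** matrix_inv Sig = mat 1 - Amat S Sig ** (cadj (Sgrave S) ** Sgrave S)"
  using matrix_inv_left[OF pos_def_mat_invertible[OF precision_pos_def]]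
  by (simp add: Amat_eq precision_def matrix_add_ldistrib algebra_simps)

lemma Amat_prior_mean:
  "Amat S Sig *v (matrix_inv Sig *v mu)
     = mu - Amat S Sig *v ((cadj (Sgrave S) ** Sgrave S) *v mu)"
  by (simp add: matrix_vector_mul_assoc Amat_mult_matrix_inv_Sig
      matrix_vector_mult_diff_rdistrib)

lemma h_mmse_eq:
  "h_mmse S mu Sig y f = Amat S Sig *v (cadj (Xgrave S f) *v y + matrix_inv Sig *v mu)"
proof -
  have "h_mmse S mu Sig y f
      = Amat S Sig *v (cadj (Xgrave S f) *v y)
        - Amat S Sig *v ((cadj (Sgrave S) ** Sgrave S) *v mu) + mu"
    by (simp add: h_mmse_def matrix_vector_mult_diff_distrib matrix_vector_mul_assoc
        cadj_Xgrave_mult_Xgrave)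
  then show ?thesis
    by (simp add: matrix_vector_right_distrib Amat_prior_mean)
qed

lemma gfun_eq:
  "gfun S mu Sig muf isig2 y f
     = 2 * Re (cinner (cadj (Xgrave S f) *v y) (Amat S Sig *v (matrix_inv Sig *v mu)))
       + herm_form (Amat S Sig) (cadj (Xgrave S f) *v y) - isig2 / 2 * (f - muf)\<^sup>2"
proof -
  have "bvec S Sig mu = Amat S Sig *v (matrix_inv Sig *v mu)"
    by (simp add: bvec_def matrix_vector_mul_assoc Amat_mult_matrix_inv_Sig)
  then show ?thesis
    by (simp add: gfun_def Let_def)
qed

lemma exponent_split:
  "herm_form (matrix_inv Sig) (h - mu) + (f - muf)\<^sup>2 / (2 * s2)
     + (norm (y - Xgrave S f *v h))\<^sup>2
     = residual + posterior_form f h - gfun S mu Sig muf (1 / s2) y f"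
  using herm_form_complete_square[of "matrix_inv Sig" "Xgrave S f" h mu y]
    pos_def_mat_invertible[OF precision_pos_def] Sig_pos_def[THEN pos_def_mat_matrix_inv]
  by (simp add: posterior_form_def residual_def gfun_eq h_mmse_eq Amat_eq precision_def
      cadj_Xgrave_mult_Xgrave pos_def_mat_def)

lemma joint_density_eq:
  "joint_density S mu Sig muf s2 h f y
     = scale * exp (gfun S mu Sig muf (1 / s2) y f - posterior_form f h)"
proof -
  have "exp (- herm_form (matrix_inv Sig) (h - mu)) * exp (- (f - muf)\<^sup>2 / (2 * s2))
        * exp (- (norm (y - Xgrave S f *v h))\<^sup>2)
      = exp (- (herm_form (matrix_inv Sig) (h - mu) + (f - muf)\<^sup>2 / (2 * s2)
               + (norm (y - Xgrave S f *v h))\<^sup>2))"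
    by (simp add: mult_exp_exp)
  also have "\<dots> = exp (- residual) * exp (gfun S mu Sig muf (1 / s2) y f - posterior_form f h)"
    by (simp add: exponent_split mult_exp_exp)
  finally show ?thesis
    by (simp add: joint_density_def cgauss_density_def rgauss_density_def noise_density_def
        scale_def field_simps)
qed

lemma integral_joint_density:
  "(\<integral>h. joint_density S mu Sig muf s2 h f y \<partial>lborel)
     = scale * gauss_mass * exp (gfun S mu Sig muf (1 / s2) y f)"
proof -
  have "(\<lambda>x. exp (- herm_form precision x)) \<in> borel_measurable borel"
    using borel_measurable_herm_form by measurable
  then have mass: "(\<integral>h. exp (- posterior_form f h) \<partial>lborel) = gauss_mass"
    unfolding posterior_form_def gauss_mass_def by (rule integral_lborel_shift)
  have "(\<integral>h. joint_density S mu Sig muf s2 h f y \<partial>lborel)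
      = scale * exp (gfun S mu Sig muf (1 / s2) y f)
        * (\<integral>h. exp (- posterior_form f h) \<partial>lborel)"
    by (simp add: joint_density_eq exp_diff exp_minus field_simps flip: integral_mult_right_zero)
  then show ?thesis
    by (simp add: mass)
qed

lemma rgauss_density_pos: "rgauss_density muf s2 f > 0"
  using s2_pos by (simp add: rgauss_density_def)

lemma cond_y_given_f_times_prior:
  "cond_y_given_f S mu Sig muf s2 y f * rgauss_density muf s2 f
     = scale * gauss_mass * exp (gfun S mu Sig muf (1 / s2) y f)"
  using rgauss_density_pos[of f] by (simp add: cond_y_given_f_def integral_joint_density)

lemma cond_y_given_f_eq:
  "cond_y_given_f S mu Sig muf s2 y f
     = scale * gauss_mass * sqrt (2 * pi * s2) * exp (gfun S mu Sig muf 0 y f)"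
proof -
  have "exp (gfun S mu Sig muf (1 / s2) y f)
      = exp (gfun S mu Sig muf 0 y f) * exp (- (f - muf)\<^sup>2 / (2 * s2))"
    by (simp add: gfun_eq exp_add[symmetric])
  then show ?thesis
    using s2_pos by (simp add: cond_y_given_f_def integral_joint_density rgauss_density_def)
qed

lemma cond_h_given_yf_eq:
  "cond_h_given_yf S mu Sig muf s2 h y f = exp (- posterior_form f h) / gauss_mass"
  unfolding cond_h_given_yf_def cond_y_given_f_times_prior joint_density_eq
  using scale_pos gauss_mass_pos by (simp add: exp_diff exp_minus field_simps)

lemma joint_maximizer_iff:
  "(\<forall>h' f'. joint_density S mu Sig muf s2 h' f' y \<le> joint_density S mu Sig muf s2 h f y)
     \<longleftrightarrow> (\<forall>f'. gfun S mu Sig muf (1 / s2) y f' \<le> gfun S mu Sig muf (1 / s2) y f)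
         \<and> h = h_mmse S mu Sig y f"
  using scale_pos
  by (simp add: joint_density_eq max_diff_nonneg_iff posterior_form_nonneg
      posterior_form_eq_0_iff)

lemma map_offset_maximizers:
  "{f. \<forall>f'. cond_y_given_f S mu Sig muf s2 y f' * rgauss_density muf s2 f'
           \<le> cond_y_given_f S mu Sig muf s2 y f * rgauss_density muf s2 f}
     = {f. \<forall>f'. gfun S mu Sig muf (1 / s2) y f' \<le> gfun S mu Sig muf (1 / s2) y f}"
  using scale_pos gauss_mass_pos by (simp add: cond_y_given_f_times_prior)

lemma ml_offset_maximizers:
  "{f. \<forall>f'. cond_y_given_f S mu Sig muf s2 y f' \<le> cond_y_given_f S mu Sig muf s2 y f}
     = {f. \<forall>f'. gfun S mu Sig muf 0 y f' \<le> gfun S mu Sig muf 0 y f}"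
  using scale_pos gauss_mass_pos s2_pos by (simp add: cond_y_given_f_eq)

lemma channel_maximizers:
  "{h. \<forall>h'. cond_h_given_yf S mu Sig muf s2 h' y f
          \<le> cond_h_given_yf S mu Sig muf s2 h y f}
     = {h_mmse S mu Sig y f}"
proof -
  have "(\<forall>h'. posterior_form f h \<le> posterior_form f h') \<longleftrightarrow> h = h_mmse S mu Sig y f" for h
    using posterior_form_nonneg posterior_form_eq_0_iff by (metis order.antisym)
  then show ?thesis
    using gauss_mass_pos by (auto simp: cond_h_given_yf_eq divide_le_cancel)
qed

end

theorem theorem2:
  fixes S :: "complex^'t::finite^'k::{finite,wellorder}"
    and mu :: "complex^('r::finite \<times> 't)"
    and Sig :: "complex^('r \<times> 't)^('r \<times> 't)"
    and muf s2 :: real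
    and y :: "complex^('r \<times> 'k)"
  assumes "pos_def_mat Sig"
    and "s2 > 0"
  shows "(\<forall>h f. (\<forall>h' f'. joint_density S mu Sig muf s2 h' f' y \<le> joint_density S mu Sig muf s2 h f y)
              \<longleftrightarrow> ((\<forall>f'. gfun S mu Sig muf (1 / s2) y f' \<le> gfun S mu Sig muf (1 / s2) y f)
                   \<and> h = h_mmse S mu Sig y f))
       \<and> {f. \<forall>f'. cond_y_given_f S mu Sig muf s2 y f' * rgauss_density muf s2 f'
                 \<le> cond_y_given_f S mu Sig muf s2 y f * rgauss_density muf s2 f}
         = {f. \<forall>f'. gfun S mu Sig muf (1 / s2) y f' \<le> gfun S mu Sig muf (1 / s2) y f}
       \<and> {f. \<forall>f'. cond_y_given_f S mu Sig muf s2 y f' \<le> cond_y_given_f S mu Sig muf s2 y f}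
         = {f. \<forall>f'. gfun S mu Sig muf 0 y f' \<le> gfun S mu Sig muf 0 y f}
       \<and> (\<forall>f. {h. \<forall>h'. cond_h_given_yf S mu Sig muf s2 h' y f \<le> cond_h_given_yf S mu Sig muf s2 h y f}
              = {h_mmse S mu Sig y f})"
proof -
  interpret mimo_map_model S mu Sig muf s2 y
    using assms by unfold_locales
  show ?thesis
    by (intro conjI allI joint_maximizer_iff map_offset_maximizers ml_offset_maximizers
        channel_maximizers)
qed

end
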